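(* Let $\Gamma$ be a strongly regular Neumaier graph with parameters $(n,k,\lambda,\mu;a,c)$. Then $\Gamma$ has exactly three distinct eigenvalues, namely $k$, $c-a-1$, and $-\frac{\mu}{a}$. Moreover, $-\frac{\mu}{a}$ is an integer.
   Context: All graphs are finite, simple, undirected and connected; eigenvalues are those of the adjacency matrix. A graph is edge-regular with parameters $(n,k,\lambda)$ if it has $n$ vertices, is $k$-regular, and any two adjacent vertices have exactly $\lambda$ common neighbours. A clique $C$ is a regular clique with nexus $a$ if every vertex not in $C$ has exactly $a$ neighbours in $C$. A Neumaier graph is a non-complete edge-regular graph containing a regular clique; it has parameters $(n,k,\lambda;a,c)$ if it is edge-regular with parameters $(n,k,\lambda)$ and contains a regular clique of size $c$ with nexus $a$. A strongly regular graph with parameters $(n,k,\lambda,\mu)$ is a non-complete connected $k$-regular graph on $n$ vertices in which adjacent vertices have $\lambda$ common neighbours and non-adjacent vertices have $\mu$ common neighbours. A strongly regular Neumaier graph with parameters $(n,k,\lambda,\mu;a,c)$ is a strongly regular graph with parameters $(n,k,\lambda,\mu)$ which is a Neumaier graph with parameters $(n,k,\lambda;a,c)$. *)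

theory Defs
  imports Complex_Main
begin

definition graph :: "'a set \<Rightarrow> ('a \<Rightarrow> 'a \<Rightarrow> bool) \<Rightarrow> bool" where
  "graph V E \<longleftrightarrow> finite V \<and> V \<noteq> {} \<and>
     (\<forall>x y. E x y \<longrightarrow> x \<in> V \<and> y \<in> V) \<and>
     (\<forall>x y. E x y \<longrightarrow> E y x) \<and> (\<forall>x. \<not> E x x) \<and>
     (\<forall>x\<in>V. \<forall>y\<in>V. E\<^sup>*\<^sup>* x y)"

definition complete_graph :: "'a set \<Rightarrow> ('a \<Rightarrow> 'a \<Rightarrow> bool) \<Rightarrow> bool" where
  "complete_graph V E \<longleftrightarrow> (\<forall>x\<in>V. \<forall>y\<in>V. x \<noteq> y \<longrightarrow> E x y)"

definition regular_graph :: "'a set \<Rightarrow> ('a \<Rightarrow> 'a \<Rightarrow> bool) \<Rightarrow> nat \<Rightarrow> bool" where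
  "regular_graph V E k \<longleftrightarrow> (\<forall>x\<in>V. card {y\<in>V. E x y} = k)"

definition edge_regular :: "'a set \<Rightarrow> ('a \<Rightarrow> 'a \<Rightarrow> bool) \<Rightarrow> nat \<Rightarrow> nat \<Rightarrow> nat \<Rightarrow> bool" where
  "edge_regular V E n k lam \<longleftrightarrow> graph V E \<and> card V = n \<and> regular_graph V E k \<and>
     (\<forall>x y. E x y \<longrightarrow> card {z\<in>V. E x z \<and> E y z} = lam)"

definition clique :: "'a set \<Rightarrow> ('a \<Rightarrow> 'a \<Rightarrow> bool) \<Rightarrow> 'a set \<Rightarrow> bool" where
  "clique V E C \<longleftrightarrow> C \<subseteq> V \<and> C \<noteq> {} \<and> (\<forall>x\<in>C. \<forall>y\<in>C. x \<noteq> y \<longrightarrow> E x y)"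

definition regular_clique :: "'a set \<Rightarrow> ('a \<Rightarrow> 'a \<Rightarrow> bool) \<Rightarrow> 'a set \<Rightarrow> nat \<Rightarrow> bool" where
  "regular_clique V E C a \<longleftrightarrow> clique V E C \<and> (\<forall>x\<in>V - C. card {y\<in>C. E x y} = a)"

definition neumaier :: "'a set \<Rightarrow> ('a \<Rightarrow> 'a \<Rightarrow> bool) \<Rightarrow> nat \<Rightarrow> nat \<Rightarrow> nat \<Rightarrow> nat \<Rightarrow> nat \<Rightarrow> bool" where
  "neumaier V E n k lam a c \<longleftrightarrow> edge_regular V E n k lam \<and> \<not> complete_graph V E \<and>
     (\<exists>C. regular_clique V E C a \<and> card C = c)"

definition strongly_regular :: "'a set \<Rightarrow> ('a \<Rightarrow> 'a \<Rightarrow> bool) \<Rightarrow> nat \<Rightarrow> nat \<Rightarrow> nat \<Rightarrow> nat \<Rightarrow> bool" where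
  "strongly_regular V E n k lam \<mu> \<longleftrightarrow> graph V E \<and> \<not> complete_graph V E \<and> card V = n \<and>
     regular_graph V E k \<and>
     (\<forall>x y. E x y \<longrightarrow> card {z\<in>V. E x z \<and> E y z} = lam) \<and>
     (\<forall>x\<in>V. \<forall>y\<in>V. x \<noteq> y \<and> \<not> E x y \<longrightarrow> card {z\<in>V. E x z \<and> E y z} = \<mu>)"

definition srg_neumaier :: "'a set \<Rightarrow> ('a \<Rightarrow> 'a \<Rightarrow> bool) \<Rightarrow> nat \<Rightarrow> nat \<Rightarrow> nat \<Rightarrow> nat \<Rightarrow> nat \<Rightarrow> nat \<Rightarrow> bool" where
  "srg_neumaier V E n k lam \<mu> a c \<longleftrightarrow> strongly_regular V E n k lam \<mu> \<and> neumaier V E n k lam a c"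

definition adj_eigenvalue :: "'a set \<Rightarrow> ('a \<Rightarrow> 'a \<Rightarrow> bool) \<Rightarrow> real \<Rightarrow> bool" where
  "adj_eigenvalue V E \<theta> \<longleftrightarrow> (\<exists>f :: 'a \<Rightarrow> real. (\<exists>x\<in>V. f x \<noteq> 0) \<and>
     (\<forall>x\<in>V. (\<Sum>y\<in>V. (if E x y then 1 else 0) * f y) = \<theta> * f x))"

end

theory Submission
  imports Defs
begin

(* For a strongly regular graph A\<^sup>2 = (\<lambda> - \<mu>) A + (k - \<mu>) I + \<mu> J, so every eigenvalue
   other than k is a root r or s of x\<^sup>2 - (\<lambda> - \<mu>) x - (k - \<mu>), and both roots occur.
   A regular clique C with nexus a gives A \<chi>\<^sub>C = (c - a - 1) \<chi>\<^sub>C + a 1, so r = c - a - 1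
   is an eigenvalue different from k.  Evaluating A\<^sup>2 \<chi>\<^sub>C at a vertex outside C yields
   a (k + r) = a \<lambda> + \<mu> (c - a), which together with r + s = \<lambda> - \<mu> and r s = \<mu> - k forces
   s = -\<mu>/a; and s = \<lambda> - \<mu> - r is an integer. *)

definition adj_op :: "'a set \<Rightarrow> ('a \<Rightarrow> 'a \<Rightarrow> bool) \<Rightarrow> ('a \<Rightarrow> real) \<Rightarrow> 'a \<Rightarrow> real" where
  "adj_op V E f x = (\<Sum>y\<in>V. of_bool (E x y) * f y)"

lemma adj_eigenvalue_iff_adj_op:
  "adj_eigenvalue V E \<theta> \<longleftrightarrow> (\<exists>f. (\<exists>x\<in>V. f x \<noteq> 0) \<and> (\<forall>x\<in>V. adj_op V E f x = \<theta> * f x))"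
  by (simp add: adj_eigenvalue_def adj_op_def of_bool_def)

lemma adj_op_linear:
  "adj_op V E (\<lambda>y. p * f y + q * g y) x = p * adj_op V E f x + q * adj_op V E g x"
  unfolding adj_op_def by (simp add: sum.distrib sum_distrib_left algebra_simps)

lemma adj_op_scale: "adj_op V E (\<lambda>y. p * f y) x = p * adj_op V E f x"
  unfolding adj_op_def by (simp add: sum_distrib_left algebra_simps)

lemma adj_op_cong: "(\<And>y. y \<in> V \<Longrightarrow> f y = g y) \<Longrightarrow> adj_op V E f x = adj_op V E g x"
  unfolding adj_op_def by (rule sum.cong) auto

locale connected_graph =
  fixes V :: "'a set" and E :: "'a \<Rightarrow> 'a \<Rightarrow> bool"
  assumes graph: "graph V E"
begin

abbreviation A :: "('a \<Rightarrow> real) \<Rightarrow> 'a \<Rightarrow> real" where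
  "A \<equiv> adj_op V E"

lemma
  shows finite_V: "finite V"
    and V_nonempty: "V \<noteq> {}"
    and adj_in_V: "E x y \<Longrightarrow> x \<in> V \<and> y \<in> V"
    and adj_sym: "E x y \<Longrightarrow> E y x"
    and adj_irrefl: "\<not> E x x"
    and connected: "x \<in> V \<Longrightarrow> y \<in> V \<Longrightarrow> E\<^sup>*\<^sup>* x y"
  using graph unfolding graph_def by blast+

lemma adj_closed_superset:
  assumes "x \<in> S" "x \<in> V" "\<And>u v. u \<in> S \<Longrightarrow> E u v \<Longrightarrow> v \<in> S"
  shows "V \<subseteq> S"
proof
  fix y assume "y \<in> V"
  with \<open>x \<in> V\<close> have "E\<^sup>*\<^sup>* x y" by (rule connected)
  then show "y \<in> S" by induction (use assms in auto)
qed

lemma exists_nonadjacent_at_distance_two: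
  assumes "\<not> complete_graph V E"
  shows "\<exists>x y z. E x y \<and> E y z \<and> x \<noteq> z \<and> \<not> E x z"
proof (rule ccontr)
  assume no_path: "\<not> ?thesis"
  obtain x z where xz: "x \<in> V" "z \<in> V" "x \<noteq> z" "\<not> E x z"
    using assms unfolding complete_graph_def by blast
  have "V \<subseteq> insert x {y. E x y}"
    by (rule adj_closed_superset[of x]) (use xz no_path in auto)
  with xz show False by auto
qed

end

locale regular_connected_graph = connected_graph +
  fixes k :: nat
  assumes regular: "regular_graph V E k"
begin

lemma degree: "x \<in> V \<Longrightarrow> card {y\<in>V. E x y} = k"
  using regular unfolding regular_graph_def by blast

lemma sum_adj_eq_degree: "x \<in> V \<Longrightarrow> (\<Sum>y\<in>V. of_bool (E x y) :: real) = real k"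
  using finite_V degree by (simp add: Collect_conj_eq Int_commute)

lemma adj_op_const: "x \<in> V \<Longrightarrow> A (\<lambda>_. p) x = real k * p"
  unfolding adj_op_def by (simp add: sum_distrib_right[symmetric] sum_adj_eq_degree)

lemma sum_adj_op: "(\<Sum>x\<in>V. A f x) = real k * sum f V"
proof -
  have "(\<Sum>x\<in>V. A f x) = (\<Sum>y\<in>V. (\<Sum>x\<in>V. of_bool (E y x)) * f y)"
    unfolding adj_op_def sum_distrib_right
    by (subst sum.swap) (auto intro!: sum.cong dest: adj_sym)
  also have "\<dots> = real k * sum f V"
    by (simp add: sum_adj_eq_degree sum_distrib_left)
  finally show ?thesis .
qed

lemma degree_eigenvalue: "adj_eigenvalue V E (real k)"
  unfolding adj_eigenvalue_iff_adj_op
  using V_nonempty adj_op_const[of _ 1] by (intro exI[of _ "\<lambda>_. 1"]) auto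

lemma sum_eigenvector_eq_0:
  assumes "\<And>x. x \<in> V \<Longrightarrow> A f x = \<theta> * f x" and "\<theta> \<noteq> real k"
  shows "sum f V = 0"
proof -
  have "real k * sum f V = (\<Sum>x\<in>V. \<theta> * f x)"
    unfolding sum_adj_op[symmetric] by (rule sum.cong) (simp_all add: assms(1))
  then have "real k * sum f V = \<theta> * sum f V"
    by (simp add: sum_distrib_left)
  with assms(2) show ?thesis by simp
qed

lemma dominating_vertex_complete:
  assumes "x \<in> V" and dominating: "\<And>y. y \<in> V \<Longrightarrow> y \<noteq> x \<Longrightarrow> E x y"
  shows "complete_graph V E"
  unfolding complete_graph_def
proof (intro ballI impI)
  fix u v assume "u \<in> V" "v \<in> V" "u \<noteq> v"
  have "{y\<in>V. E x y} = V - {x}"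
    using dominating adj_irrefl by auto
  then have "k = card (V - {u})"
    using degree[OF \<open>x \<in> V\<close>] \<open>x \<in> V\<close> \<open>u \<in> V\<close> finite_V by simp
  then have "{y\<in>V. E u y} = V - {u}"
    using degree[OF \<open>u \<in> V\<close>] finite_V adj_irrefl by (intro card_subset_eq) auto
  with \<open>v \<in> V\<close> \<open>u \<noteq> v\<close> show "E u v" by auto
qed

text \<open>Since \<open>A - k\<close> annihilates the constant functions, it turns a solution of
  \<open>A u = \<theta> u + \<gamma>\<close> into a \<open>\<theta>\<close>-eigenvector.\<close>
lemma adj_op_minus_degree_eigenvector:
  assumes affine: "\<And>y. y \<in> V \<Longrightarrow> A u y = \<theta> * u y + \<gamma>" and "x \<in> V"
  shows "A (\<lambda>y. A u y - real k * u y) x = \<theta> * (A u x - real k * u x)"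
proof -
  have "A (\<lambda>y. A u y - real k * u y) x = A (\<lambda>y. (\<theta> - real k) * u y + \<gamma> * 1) x"
    by (rule adj_op_cong) (simp add: affine algebra_simps)
  also have "\<dots> = (\<theta> - real k) * A u x + \<gamma> * real k"
    by (simp only: adj_op_linear adj_op_const[OF \<open>x \<in> V\<close>])
  finally show ?thesis
    using affine[OF \<open>x \<in> V\<close>] by (simp add: algebra_simps)
qed

end

locale strongly_regular_graph =
  fixes V :: "'a set" and E :: "'a \<Rightarrow> 'a \<Rightarrow> bool" and n k lam mu :: nat
  assumes srg: "strongly_regular V E n k lam mu"

sublocale strongly_regular_graph \<subseteq> regular_connected_graph V E k
  by unfold_locales (use srg in \<open>simp_all add: strongly_regular_def\<close>)

context strongly_regular_graph
begin

lemma
  shows not_complete: "\<not> complete_graph V E"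
    and common_neighbours_adj: "E x y \<Longrightarrow> card {z\<in>V. E x z \<and> E y z} = lam"
    and common_neighbours_nonadj:
      "x \<in> V \<Longrightarrow> y \<in> V \<Longrightarrow> x \<noteq> y \<Longrightarrow> \<not> E x y \<Longrightarrow> card {z\<in>V. E x z \<and> E y z} = mu"
  using srg unfolding strongly_regular_def by blast+

lemma walks_of_length_two:
  assumes "x \<in> V" "z \<in> V"
  shows "(\<Sum>y\<in>V. of_bool (E x y) * of_bool (E y z) :: real) =
    (if z = x then real k else if E x z then real lam else real mu)"
proof -
  have "(\<Sum>y\<in>V. of_bool (E x y) * of_bool (E y z) :: real) = (\<Sum>y\<in>V. of_bool (E x y \<and> E z y))"
    by (rule sum.cong) (auto dest: adj_sym)
  also have "\<dots> = real (card {y\<in>V. E x y \<and> E z y})"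
    using finite_V by (simp add: Collect_conj_eq Int_commute)
  finally show ?thesis
    using assms degree common_neighbours_adj common_neighbours_nonadj by auto
qed

lemma adj_op_square:
  assumes "x \<in> V"
  shows "A (A f) x = (real lam - real mu) * A f x + (real k - real mu) * f x + real mu * sum f V"
proof -
  have "A (A f) x = (\<Sum>y\<in>V. \<Sum>z\<in>V. of_bool (E x y) * of_bool (E y z) * f z)"
    unfolding adj_op_def by (simp add: sum_distrib_left mult.assoc)
  also have "\<dots> = (\<Sum>z\<in>V. (\<Sum>y\<in>V. of_bool (E x y) * of_bool (E y z)) * f z)"
    by (subst sum.swap) (simp add: sum_distrib_right)
  also have "\<dots> = (\<Sum>z\<in>V. (if z = x then real k else if E x z then real lam else real mu) * f z)"
    by (rule sum.cong) (simp_all add: walks_of_length_two assms)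
  also have "\<dots> = (\<Sum>z\<in>V. (real k - real mu) * (of_bool (z = x) * f z)
      + (real lam - real mu) * (of_bool (E x z) * f z) + real mu * f z)"
    by (rule sum.cong) (auto simp: adj_irrefl algebra_simps)
  also have "\<dots> = (real lam - real mu) * A f x + (real k - real mu) * f x + real mu * sum f V"
    using assms finite_V by (simp add: sum.distrib sum_distrib_left[symmetric] adj_op_def)
  finally show ?thesis .
qed

lemma mu_pos: "mu > 0"
proof -
  obtain x y z where "E x y" "E y z" "x \<noteq> z" "\<not> E x z"
    using exists_nonadjacent_at_distance_two not_complete by blast
  then have "y \<in> {w\<in>V. E x w \<and> E z w}" and "x \<in> V" "z \<in> V"
    using adj_in_V adj_sym by blast+
  then have "card {w\<in>V. E x w \<and> E z w} > 0"
    using finite_V by (subst card_gt_0_iff) auto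
  with common_neighbours_nonadj \<open>x \<in> V\<close> \<open>z \<in> V\<close> \<open>x \<noteq> z\<close> \<open>\<not> E x z\<close> show ?thesis
    by simp
qed

lemma eigenvalue_quadratic:
  assumes "adj_eigenvalue V E \<theta>" "\<theta> \<noteq> real k"
  shows "\<theta>\<^sup>2 = (real lam - real mu) * \<theta> + (real k - real mu)"
proof -
  obtain f x where "x \<in> V" "f x \<noteq> 0" and eigen: "\<And>y. y \<in> V \<Longrightarrow> A f y = \<theta> * f y"
    using assms(1) unfolding adj_eigenvalue_iff_adj_op by blast
  have "sum f V = 0"
    using sum_eigenvector_eq_0 eigen assms(2) by blast
  have "\<theta>\<^sup>2 * f x = A (\<lambda>y. \<theta> * f y) x"
    using eigen \<open>x \<in> V\<close> by (simp add: adj_op_scale power2_eq_square)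
  also have "\<dots> = A (A f) x"
    by (rule adj_op_cong) (simp add: eigen)
  also have "\<dots> = ((real lam - real mu) * \<theta> + (real k - real mu)) * f x"
    using adj_op_square[OF \<open>x \<in> V\<close>, of f] eigen[OF \<open>x \<in> V\<close>] \<open>sum f V = 0\<close>
    by (simp add: algebra_simps)
  finally show ?thesis
    using \<open>f x \<noteq> 0\<close> by simp
qed

text \<open>Because \<open>(A - \<theta>)(A - \<theta>') = \<mu> J\<close>, the function \<open>(A - k)(A - \<theta>') \<delta>\<^sub>x\<close> is a
  \<open>\<theta>\<close>-eigenvector; at a vertex not adjacent to \<open>x\<close> it takes the value \<open>\<mu>\<close>.\<close>
lemma root_eigenvalue:
  assumes sum: "\<theta> + \<theta>' = real lam - real mu" and prod: "\<theta> * \<theta>' = real mu - real k"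
  shows "adj_eigenvalue V E \<theta>"
proof -
  obtain x z where "x \<in> V" "z \<in> V" "x \<noteq> z" "\<not> E z x"
    using not_complete adj_sym unfolding complete_graph_def by blast
  define \<delta> :: "'a \<Rightarrow> real" where "\<delta> y = of_bool (y = x)" for y
  define u where "u = (\<lambda>y. A \<delta> y - \<theta>' * \<delta> y)"
  have A_\<delta>: "A \<delta> y = of_bool (E y x)" for y
    using \<open>x \<in> V\<close> finite_V by (simp add: adj_op_def \<delta>_def)
  have "sum \<delta> V = 1"
    using \<open>x \<in> V\<close> finite_V by (simp add: \<delta>_def)
  have coeffs: "real lam - real mu = \<theta> + \<theta>'" "real k - real mu = - (\<theta> * \<theta>')"
    using sum prod by linarith+
  have A_u: "A u y = \<theta> * u y + real mu" if "y \<in> V" for y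
  proof -
    have "A u y = A (A \<delta>) y - \<theta>' * A \<delta> y"
      using adj_op_linear[of V E 1 "A \<delta>" "- \<theta>'" \<delta> y] by (simp add: u_def)
    also have "\<dots> = \<theta> * (A \<delta> y - \<theta>' * \<delta> y) + real mu"
      using adj_op_square[OF that, of \<delta>, unfolded coeffs] \<open>sum \<delta> V = 1\<close>
      by (simp add: algebra_simps)
    finally show ?thesis
      by (simp add: u_def)
  qed
  have "u z = 0"
    using \<open>x \<noteq> z\<close> \<open>\<not> E z x\<close> by (simp add: u_def A_\<delta> \<delta>_def)
  then have "A u z - real k * u z \<noteq> 0"
    using A_u[OF \<open>z \<in> V\<close>] mu_pos by simp
  moreover have "A (\<lambda>y. A u y - real k * u y) y = \<theta> * (A u y - real k * u y)" if "y \<in> V" for y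
    using adj_op_minus_degree_eigenvector[of u \<theta> "real mu", OF A_u that] .
  ultimately show ?thesis
    unfolding adj_eigenvalue_iff_adj_op using \<open>z \<in> V\<close>
    by (intro exI[of _ "\<lambda>y. A u y - real k * u y"]) blast
qed

theorem eigenvalues_eq:
  assumes sum: "r + s = real lam - real mu" and prod: "r * s = real mu - real k"
  shows "{\<theta>. adj_eigenvalue V E \<theta>} = {real k, r, s}"
proof (intro equalityI subsetI)
  fix \<theta> assume "\<theta> \<in> {\<theta>. adj_eigenvalue V E \<theta>}"
  show "\<theta> \<in> {real k, r, s}"
  proof (cases "\<theta> = real k")
    case False
    have "(\<theta> - r) * (\<theta> - s) = \<theta>\<^sup>2 - (r + s) * \<theta> + r * s"
      by (simp add: algebra_simps power2_eq_square)
    also have "\<dots> = 0"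
      using eigenvalue_quadratic[OF _ False] \<open>\<theta> \<in> {\<theta>. adj_eigenvalue V E \<theta>}\<close> sum prod by simp
    finally show ?thesis by simp
  qed simp
next
  have "adj_eigenvalue V E r" "adj_eigenvalue V E s"
    using root_eigenvalue[of r s] root_eigenvalue[of s r] sum prod by (simp_all add: algebra_simps)
  then show "\<theta> \<in> {\<theta>. adj_eigenvalue V E \<theta>}" if "\<theta> \<in> {real k, r, s}" for \<theta>
    using that degree_eigenvalue by auto
qed

end

locale srg_regular_clique = strongly_regular_graph +
  fixes C :: "'a set" and a :: nat
  assumes regular_clique: "regular_clique V E C a"
begin

lemma
  shows clique_subset: "C \<subseteq> V"
    and clique_nonempty: "C \<noteq> {}"
    and clique_adj: "x \<in> C \<Longrightarrow> y \<in> C \<Longrightarrow> x \<noteq> y \<Longrightarrow> E x y"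
    and nexus: "x \<in> V \<Longrightarrow> x \<notin> C \<Longrightarrow> card {y\<in>C. E x y} = a"
  using regular_clique unfolding regular_clique_def clique_def by blast+

lemma finite_clique: "finite C"
  using clique_subset finite_V by (rule finite_subset)

lemma exists_vertex_outside_clique: "\<exists>x\<in>V. x \<notin> C"
  using not_complete clique_subset clique_adj unfolding complete_graph_def by blast

lemma nexus_pos: "a > 0"
proof (rule ccontr)
  assume "\<not> a > 0"
  obtain x where "x \<in> C"
    using clique_nonempty by blast
  have "V \<subseteq> C"
  proof (rule adj_closed_superset[of x])
    fix u v assume "u \<in> C" "E u v"
    show "v \<in> C"
    proof (rule ccontr)
      assume "v \<notin> C"
      then have "{y\<in>C. E v y} = {}"
        using nexus[of v] adj_in_V[OF \<open>E u v\<close>] \<open>\<not> a > 0\<close> finite_clique by simp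
      with \<open>u \<in> C\<close> \<open>E u v\<close> adj_sym show False by blast
    qed
  qed (use \<open>x \<in> C\<close> clique_subset in auto)
  with exists_vertex_outside_clique show False by blast
qed

lemma neighbours_in_clique: "x \<in> C \<Longrightarrow> {y\<in>C. E x y} = C - {x}"
  using clique_adj adj_irrefl by auto

lemma card_clique_le_Suc_degree: "card C \<le> Suc k"
proof -
  obtain x where "x \<in> C"
    using clique_nonempty by blast
  then have "C - {x} \<subseteq> {y\<in>V. E x y}"
    using neighbours_in_clique clique_subset by blast
  then have "card (C - {x}) \<le> card {y\<in>V. E x y}"
    using finite_V by (intro card_mono) auto
  with \<open>x \<in> C\<close> clique_subset degree finite_clique show ?thesis by auto
qed

lemma nexus_less_card: "a < card C"
proof (rule ccontr)
  assume "\<not> a < card C"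
  obtain x where "x \<in> C"
    using clique_nonempty by blast
  have "complete_graph V E"
  proof (rule dominating_vertex_complete)
    show "x \<in> V" using \<open>x \<in> C\<close> clique_subset by blast
  next
    fix y assume "y \<in> V" "y \<noteq> x"
    show "E x y"
    proof (cases "y \<in> C")
      case True
      with \<open>x \<in> C\<close> \<open>y \<noteq> x\<close> show ?thesis by (simp add: clique_adj)
    next
      case False
      have "card {z\<in>C. E y z} \<le> card C"
        using finite_clique by (intro card_mono) auto
      then have "{z\<in>C. E y z} = C"
        using nexus[OF \<open>y \<in> V\<close> False] \<open>\<not> a < card C\<close> finite_clique
        by (intro card_subset_eq) auto
      with \<open>x \<in> C\<close> show ?thesis by (blast intro: adj_sym)
    qed
  qed
  with not_complete show False by blast
qed

lemma clique_eigenvalue_less_degree: "real (card C) - real a - 1 < real k"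
  using card_clique_le_Suc_degree nexus_pos by linarith

lemma adj_op_clique_indicator:
  assumes "x \<in> V"
  shows "A (\<lambda>y. of_bool (y \<in> C)) x = (real (card C) - real a - 1) * of_bool (x \<in> C) + real a"
proof -
  have "A (\<lambda>y. of_bool (y \<in> C)) x = (\<Sum>y\<in>V. of_bool (y \<in> {y\<in>C. E x y}))"
    unfolding adj_op_def by (rule sum.cong) auto
  also have "\<dots> = real (card {y\<in>C. E x y})"
    using finite_V clique_subset by (simp add: Int_absorb1 subset_iff)
  finally show ?thesis
    using neighbours_in_clique nexus[OF assms] finite_clique nexus_less_card by auto
qed

lemma clique_eigenvalue: "adj_eigenvalue V E (real (card C) - real a - 1)"
proof -
  define r where "r = real (card C) - real a - 1"
  define f where "f = (\<lambda>y. (real k - r) * of_bool (y \<in> C) + (- real a) * 1)"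
  have "A f x = r * f x" if "x \<in> V" for x
  proof -
    have "A f x = (real k - r) * A (\<lambda>y. of_bool (y \<in> C)) x + (- real a) * A (\<lambda>_. 1) x"
      unfolding f_def by (rule adj_op_linear)
    then show ?thesis
      using adj_op_clique_indicator[OF that] adj_op_const[OF that]
      by (simp add: f_def r_def algebra_simps)
  qed
  moreover obtain y where "y \<in> V" "y \<notin> C"
    using exists_vertex_outside_clique by blast
  then have "f y \<noteq> 0"
    using nexus_pos by (simp add: f_def)
  ultimately show ?thesis
    unfolding adj_eigenvalue_iff_adj_op r_def using \<open>y \<in> V\<close> by blast
qed

text \<open>Counting walks of length two from a vertex outside \<open>C\<close> into \<open>C\<close>, once via the
  nexus and once via the parameters \<open>\<lambda>, \<mu>\<close>.\<close>
lemma nexus_equation: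
  "real a * (real k + (real (card C) - real a - 1))
    = real a * real lam + real mu * (real (card C) - real a)"
proof -
  define \<chi> :: "'a \<Rightarrow> real" where "\<chi> y = of_bool (y \<in> C)" for y
  obtain x where "x \<in> V" "x \<notin> C"
    using exists_vertex_outside_clique by blast
  have "sum \<chi> V = real (card C)"
    using finite_V clique_subset by (simp add: \<chi>_def Int_absorb1 subset_iff)
  have "A (A \<chi>) x = A (\<lambda>y. (real (card C) - real a - 1) * \<chi> y + real a * 1) x"
    by (rule adj_op_cong) (simp add: adj_op_clique_indicator \<chi>_def[abs_def])
  also have "\<dots> = (real (card C) - real a - 1) * A \<chi> x + real a * A (\<lambda>_. 1) x"
    by (rule adj_op_linear)
  also have "\<dots> = real a * (real k + (real (card C) - real a - 1))"
    using adj_op_clique_indicator[OF \<open>x \<in> V\<close>] \<open>x \<notin> C\<close> adj_op_const[OF \<open>x \<in> V\<close>]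
    by (simp add: \<chi>_def[abs_def] algebra_simps)
  finally show ?thesis
    using adj_op_square[OF \<open>x \<in> V\<close>, of \<chi>] adj_op_clique_indicator[OF \<open>x \<in> V\<close>]
      \<open>sum \<chi> V = real (card C)\<close> \<open>x \<notin> C\<close>
    by (simp add: \<chi>_def[abs_def] algebra_simps)
qed

lemma clique_eigenvalue_partner:
  defines "r \<equiv> real (card C) - real a - 1" and "s \<equiv> - real mu / real a"
  shows "r + s = real lam - real mu" and "r * s = real mu - real k"
proof -
  define t where "t = real lam - real mu - r"
  have "r\<^sup>2 = (real lam - real mu) * r + (real k - real mu)"
    using eigenvalue_quadratic clique_eigenvalue clique_eigenvalue_less_degree
    unfolding r_def by simp
  then have prod: "r * t = real mu - real k"
    by (simp add: t_def power2_eq_square algebra_simps)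
  have "(real a * t + real mu) * (r + 1)
      = (real a * real lam + real mu * (r + 1)) - real a * (real k + r)
        + real a * (r * t - (real mu - real k))"
    by (simp add: t_def algebra_simps)
  also have "\<dots> = 0"
    using nexus_equation prod by (simp add: r_def)
  finally have "real a * t + real mu = 0"
    using nexus_less_card by (simp add: r_def)
  then have "t = s"
    using nexus_pos by (simp add: s_def field_simps)
  with prod show "r + s = real lam - real mu" and "r * s = real mu - real k"
    by (simp_all add: t_def)
qed

end

theorem proposition3p6:
  fixes V :: "'a set" and E :: "'a \<Rightarrow> 'a \<Rightarrow> bool"
    and n k lam \<mu> a c :: nat
  assumes "srg_neumaier V E n k lam \<mu> a c"
  shows "{\<theta>. adj_eigenvalue V E \<theta>} = {real k, real c - real a - 1, - real \<mu> / real a}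
    \<and> card {\<theta>. adj_eigenvalue V E \<theta>} = 3
    \<and> - real \<mu> / real a \<in> \<int>"
proof -
  obtain C where "strongly_regular V E n k lam \<mu>" "regular_clique V E C a" and "card C = c"
    using assms unfolding srg_neumaier_def neumaier_def by blast
  then interpret srg_regular_clique V E n k lam \<mu> C a
    by unfold_locales
  define r s where "r = real c - real a - 1" and "s = - real \<mu> / real a"
  have sum: "r + s = real lam - real \<mu>" and prod: "r * s = real \<mu> - real k"
    using clique_eigenvalue_partner \<open>card C = c\<close> by (simp_all add: r_def s_def)
  have "s < 0" "0 \<le> r" "r < real k"
    using mu_pos nexus_pos nexus_less_card clique_eigenvalue_less_degree \<open>card C = c\<close>
    by (simp_all add: r_def s_def)
  then have "card {real k, r, s} = 3"
    by simp
  moreover have "s = real lam - real \<mu> - real c + real a + 1"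
    using sum by (simp add: r_def)
  then have "s \<in> \<int>"
    by simp
  ultimately show ?thesis
    using eigenvalues_eq[OF sum prod] by (simp add: r_def s_def)
qed

end
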